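(* Let $d = d_s + d_n$, let $\mathbf{v} \in \mathbb{R}^{d_s}$ and $\sigma > 0$. Consider the data distribution $\mathcal{D}$ on pairs $(\mathbf{x}, y)$ with $y \in \{-1,1\}$ and $\mathbf{x} = (\mathbf{x}_s, \mathbf{x}_n) \in \mathbb{R}^{d_s}\times\mathbb{R}^{d_n}$, where conditionally on $y$, $\mathbf{x}_s \sim \mathcal{N}(y\mathbf{v}, \sigma^2 I_{d_s})$ and $\mathbf{x}_n \sim \mathcal{N}(0, \sigma^2 I_{d_n})$. Consider the two-layer linear model $f(\mathbf{x}) = W_2 W_1 \mathbf{x}$ with $W_2 \in \mathbb{R}^{1\times m}$, $W_1 \in \mathbb{R}^{m \times d}$, and write $W_1 = (W_s \; W_n)$ with $W_s \in \mathbb{R}^{m\times d_s}$, $W_n \in \mathbb{R}^{m \times d_n}$. The model is trained on the population mean squared error $$\mathcal{L}(W_1, W_2) = \mathbb{E}_{(\mathbf{x},y)\sim\mathcal{D}}\left[\tfrac{1}{2}\|f(\mathbf{x}) - y\|^2\right]$$ by gradient flow. Suppose that at initialization $W_2^\top W_2 = W_1 W_1^\top$, and that the gradient flow converges to a global minimum of $\mathcal{L}$. Then at this limit point $W_n = 0$.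
   Context: Gradient flow means the continuous-time dynamics $\frac{d}{dt}W_1 = -\frac{\partial \mathcal{L}}{\partial W_1}$, $\frac{d}{dt}W_2 = -\frac{\partial \mathcal{L}}{\partial W_2}$. $W_s$ collects the first-layer weights connected to the signal coordinates $\mathbf{x}_s$ and $W_n$ those connected to the pure-noise coordinates $\mathbf{x}_n$. *)

theory Defs
  imports "HOL-Probability.Probability"
begin

definition gauss_vec :: "real \<Rightarrow> real^'i::finite \<Rightarrow> ('i \<Rightarrow> real) measure" where
  "gauss_vec \<sigma> \<mu> = PiM UNIV (\<lambda>i. density lborel (normal_density (\<mu> $ i) \<sigma>))"

text \<open>Concatenation x = (x_s, x_n) in R^(d_s + d_n); the index type of R^d is 's + 'n.\<close>
definition concat_vec :: "('s::finite \<Rightarrow> real) \<Rightarrow> ('n::finite \<Rightarrow> real) \<Rightarrow> real^('s + 'n)" where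
  "concat_vec xs xn = (\<chi> j. case j of Inl i \<Rightarrow> xs i | Inr i \<Rightarrow> xn i)"

definition cond_dist :: "real \<Rightarrow> real^'s::finite \<Rightarrow> real \<Rightarrow> (('s \<Rightarrow> real) \<times> ('n::finite \<Rightarrow> real)) measure" where
  "cond_dist \<sigma> v y = gauss_vec \<sigma> (y *\<^sub>R v) \<Otimes>\<^sub>M gauss_vec \<sigma> 0"

definition model :: "(real^('d::finite)^('m::finite)) \<times> (real^'m^1) \<Rightarrow> real^'d \<Rightarrow> real^1" where
  "model W x = (snd W ** fst W) *v x"

text \<open>Population MSE: E_{(x,y) ~ D}[1/2 ||f(x) - y||^2], where P(y = 1) = p, P(y = -1) = 1 - p.\<close>
definition pop_loss :: "real \<Rightarrow> real \<Rightarrow> real^'s::finite \<Rightarrow>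
    (real^('s + 'n::finite)^('m::finite)) \<times> (real^'m^1) \<Rightarrow> real" where
  "pop_loss p \<sigma> v W =
     p * (\<integral>z. 1/2 * (norm (model W (concat_vec (fst z) (snd z)) - vec 1))\<^sup>2
            \<partial>(cond_dist \<sigma> v 1 :: (('s \<Rightarrow> real) \<times> ('n \<Rightarrow> real)) measure))
   + (1 - p) * (\<integral>z. 1/2 * (norm (model W (concat_vec (fst z) (snd z)) - vec (-1)))\<^sup>2
            \<partial>(cond_dist \<sigma> v (-1) :: (('s \<Rightarrow> real) \<times> ('n \<Rightarrow> real)) measure))"

definition is_gradient :: "('a::real_inner \<Rightarrow> real) \<Rightarrow> 'a \<Rightarrow> 'a \<Rightarrow> bool" where
  "is_gradient L G W \<longleftrightarrow> (L has_derivative (\<lambda>h. G \<bullet> h)) (at W)"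

definition gradient_flow :: "('a::real_inner \<Rightarrow> real) \<Rightarrow> (real \<Rightarrow> 'a) \<Rightarrow> bool" where
  "gradient_flow L W \<longleftrightarrow> (\<forall>t\<ge>0. \<exists>G. is_gradient L G (W t) \<and>
       (W has_vector_derivative - G) (at t within {0..}))"

end

theory Submission
  imports Defs
begin

text \<open>The loss depends on \<open>(W\<^sub>1, W\<^sub>2)\<close> only through the product \<open>W\<^sub>2 W\<^sub>1\<close>, and
  this product is unchanged to first order when \<open>W\<^sub>1\<close> is replaced by \<open>(I + sD) W\<^sub>1\<close> and
  \<open>W\<^sub>2\<close> by \<open>W\<^sub>2 (I - sD)\<close>. Hence every gradient \<open>G\<close> satisfies
  \<open>G\<^sub>1 W\<^sub>1\<^sup>T = W\<^sub>2\<^sup>T G\<^sub>2\<close>, so the imbalance \<open>W\<^sub>1 W\<^sub>1\<^sup>T - W\<^sub>2\<^sup>T W\<^sub>2\<close> is conserved by the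
  gradient flow and vanishes at the limit point as well.

  For the Gaussian data the loss is \<open>\<onehalf>((\<beta>\<^sub>s \<bullet> v - 1)\<^sup>2 + \<sigma>\<^sup>2 |\<beta>|\<^sup>2)\<close> with \<open>\<beta> = W\<^sub>2 W\<^sub>1\<close>,
  so at a global minimum the noise part \<open>\<beta>\<^sub>n\<close> is zero (otherwise zeroing the noise columns
  of \<open>W\<^sub>1\<close> would lower the loss). Finally, balancedness gives
  \<open>|W\<^sub>1\<^sup>T x| = |W\<^sub>2 x|\<close> for every \<open>x\<close>; for a noise column \<open>c\<close> of \<open>W\<^sub>1\<close> the right-hand side
  is the corresponding entry of \<open>\<beta>\<^sub>n\<close>, i.e. zero, while the matching entry of \<open>W\<^sub>1\<^sup>T c\<close>
  is \<open>|c|\<^sup>2\<close>.\<close>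

lemma bounded_bilinear_matrix_matrix_mult:
  "bounded_bilinear ((**) :: real^'n^'m \<Rightarrow> real^'p^'n \<Rightarrow> real^'p^'m)"
  unfolding bilinear_conv_bounded_bilinear[symmetric] bilinear_def
  by (auto intro!: linearI simp: matrix_matrix_mult_def vec_eq_iff sum.distrib
      sum_distrib_left algebra_simps)

lemmas matrix_mult_add_right = bounded_bilinear_matrix_matrix_mult[THEN bounded_bilinear.add_right]
  and matrix_mult_diff_left = bounded_bilinear_matrix_matrix_mult[THEN bounded_bilinear.diff_left]
  and matrix_mult_minus_left = bounded_bilinear_matrix_matrix_mult[THEN bounded_bilinear.minus_left]
  and matrix_mult_minus_right = bounded_bilinear_matrix_matrix_mult[THEN bounded_bilinear.minus_right]
  and matrix_mult_scaleR_left = bounded_bilinear_matrix_matrix_mult[THEN bounded_bilinear.scaleR_left]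
  and matrix_mult_scaleR_right = bounded_bilinear_matrix_matrix_mult[THEN bounded_bilinear.scaleR_right]

lemma bounded_linear_transpose: "bounded_linear (transpose :: real^'n^'m \<Rightarrow> real^'m^'n)"
  unfolding linear_conv_bounded_linear[symmetric]
  by (auto intro!: linearI simp: transpose_def vec_eq_iff)

lemma transpose_uminus: "transpose (- A) = - transpose A"
  by (simp add: transpose_def vec_eq_iff)

lemma inner_transpose: "transpose A \<bullet> transpose B = A \<bullet> (B :: real^'n^'m)"
  by (simp add: inner_vec_def transpose_def) (rule sum.swap)

lemma inner_matrix_mult_left:
  fixes A :: "real^'n^'m" and B :: "real^'p^'n"
  shows "C \<bullet> (A ** B) = (C ** transpose B) \<bullet> A"
  by (simp add: inner_vec_def matrix_matrix_mult_def transpose_def sum_distrib_left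
      sum_distrib_right mult_ac sum.swap[where A = "UNIV :: 'n set"])

lemma inner_matrix_mult_right:
  fixes A :: "real^'n^'m" and B :: "real^'p^'n"
  shows "C \<bullet> (A ** B) = (transpose A ** C) \<bullet> B"
proof -
  have "C \<bullet> (A ** B) = transpose C \<bullet> (transpose B ** transpose A)"
    by (simp add: inner_transpose flip: matrix_transpose_mul)
  also have "\<dots> = (transpose C ** A) \<bullet> transpose B"
    by (simp add: inner_matrix_mult_left)
  also have "\<dots> = (transpose A ** C) \<bullet> B"
    by (simp add: matrix_transpose_mul flip: inner_transpose[of "transpose C ** A"])
  finally show ?thesis .
qed

lemma has_derivative_even_direction:
  fixes f :: "'a::real_normed_vector \<Rightarrow> real"
  assumes f: "(f has_derivative f') (at x)"
    and even: "\<And>s::real. f (x + s *\<^sub>R h) = f (x - s *\<^sub>R h)"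
  shows "f' h = 0"
proof -
  interpret f': bounded_linear f' using f by (rule has_derivative_bounded_linear)
  have f0: "(f has_derivative f') (at (x + 0 *\<^sub>R h))" "(f has_derivative f') (at (x - 0 *\<^sub>R h))"
    using f by simp_all
  have "((\<lambda>s::real. x + s *\<^sub>R h) has_derivative (\<lambda>s. s *\<^sub>R h)) (at 0)"
    by (auto intro!: derivative_eq_intros)
  from has_derivative_compose[OF this f0(1)]
  have fwd: "((\<lambda>s. f (x + s *\<^sub>R h)) has_derivative (\<lambda>s. s *\<^sub>R f' h)) (at 0)"
    by (simp add: f'.scaleR)
  have "((\<lambda>s::real. x - s *\<^sub>R h) has_derivative (\<lambda>s. - (s *\<^sub>R h))) (at 0)"
    by (auto intro!: derivative_eq_intros)
  from has_derivative_compose[OF this f0(2)]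
  have bwd: "((\<lambda>s. f (x - s *\<^sub>R h)) has_derivative (\<lambda>s. - (s *\<^sub>R f' h))) (at 0)"
    by (simp add: f'.scaleR f'.neg)
  have "(\<lambda>s. s *\<^sub>R f' h) = (\<lambda>s. - (s *\<^sub>R f' h))"
    using has_derivative_unique[OF fwd] bwd by (simp add: even)
  from fun_cong[OF this, of 1] show ?thesis by simp
qed

lemma matrix_mult_rebalance:
  fixes W1 :: "real^'d^'m" and W2 :: "real^'m^'k"
  shows "(W2 - s *\<^sub>R (W2 ** D)) ** (W1 + s *\<^sub>R (D ** W1))
    = W2 ** W1 - (s * s) *\<^sub>R (W2 ** (D ** (D ** W1)))"
  by (simp add: matrix_mult_add_right matrix_mult_diff_left matrix_mult_scaleR_left
      matrix_mult_scaleR_right matrix_mul_assoc scaleR_diff_right)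

lemma gradient_balanced:
  fixes L :: "(real^'d^'m) \<times> (real^'m^'k) \<Rightarrow> real"
  assumes factors: "\<And>X Y. snd X ** fst X = snd Y ** fst Y \<Longrightarrow> L X = L Y"
    and grad: "is_gradient L G W"
  shows "fst G ** transpose (fst W) = transpose (snd W) ** snd G"
proof -
  \<comment> \<open>Along \<open>H\<close> the product \<open>W\<^sub>2 W\<^sub>1\<close> is even in \<open>s\<close>, so \<open>G \<bullet> H = 0\<close>;
    and for this choice of \<open>D\<close>, \<open>G \<bullet> H = D \<bullet> D\<close>.\<close>
  define D where "D = fst G ** transpose (fst W) - transpose (snd W) ** snd G"
  define H where "H = (D ** fst W, - (snd W ** D))"
  have "L (W + s *\<^sub>R H) = L (W - s *\<^sub>R H)" for s
  proof (rule factors)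
    show "snd (W + s *\<^sub>R H) ** fst (W + s *\<^sub>R H) = snd (W - s *\<^sub>R H) ** fst (W - s *\<^sub>R H)"
      using matrix_mult_rebalance[of "snd W" s D "fst W"]
        matrix_mult_rebalance[of "snd W" "-s" D "fst W"]
      by (simp add: H_def)
  qed
  then have "G \<bullet> H = 0"
    using has_derivative_even_direction grad unfolding is_gradient_def by blast
  have "D \<bullet> D = fst G \<bullet> (D ** fst W) - snd G \<bullet> (snd W ** D)"
    unfolding inner_matrix_mult_left[of "fst G"] inner_matrix_mult_right[of "snd G"]
    by (simp add: D_def inner_diff_left)
  also have "\<dots> = G \<bullet> H"
    by (simp add: H_def inner_prod_def)
  finally show ?thesis
    using \<open>G \<bullet> H = 0\<close> by (simp add: D_def)
qed

definition imbalance :: "(real^'d^'m) \<times> (real^'m^'k) \<Rightarrow> real^'m^'m" where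
  "imbalance W = fst W ** transpose (fst W) - transpose (snd W) ** snd W"

lemma has_vector_derivative_imbalance:
  assumes "(W has_vector_derivative V) (at t within S)"
  shows "((\<lambda>t. imbalance (W t)) has_vector_derivative
      (fst (W t) ** transpose (fst V) + fst V ** transpose (fst (W t)))
    - (transpose (snd (W t)) ** snd V + transpose (snd V) ** snd (W t))) (at t within S)"
proof -
  note W = assms[unfolded has_vector_derivative_def]
  note W1 = has_derivative_fst[OF W] and W2 = has_derivative_snd[OF W]
  note transpose = bounded_linear.has_derivative[OF bounded_linear_transpose]
  have "((\<lambda>t. imbalance (W t)) has_derivative (\<lambda>h.
      (fst (W t) ** transpose (fst (h *\<^sub>R V)) + fst (h *\<^sub>R V) ** transpose (fst (W t)))
    - (transpose (snd (W t)) ** snd (h *\<^sub>R V) + transpose (snd (h *\<^sub>R V)) ** snd (W t))))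
    (at t within S)"
    unfolding imbalance_def
    by (intro has_derivative_diff bounded_bilinear.FDERIV[OF bounded_bilinear_matrix_matrix_mult]
        W1 W2 transpose[OF W1] transpose[OF W2])
  then show ?thesis
    unfolding has_vector_derivative_def
    by (simp add: transpose_scalar scaleR_add_right scaleR_diff_right matrix_mult_scaleR_left
        matrix_mult_scaleR_right)
qed

lemma gradient_flow_imbalance_const:
  fixes L :: "(real^'d^'m) \<times> (real^'m^'k) \<Rightarrow> real"
  assumes factors: "\<And>X Y. snd X ** fst X = snd Y ** fst Y \<Longrightarrow> L X = L Y"
    and flow: "gradient_flow L W" and "t \<ge> 0"
  shows "imbalance (W t) = imbalance (W 0)"
proof -
  have "((\<lambda>t. imbalance (W t)) has_vector_derivative 0) (at t within {0..})" if "t \<ge> 0" for t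
  proof -
    obtain G where grad: "is_gradient L G (W t)"
      and W': "(W has_vector_derivative - G) (at t within {0..})"
      using flow \<open>t \<ge> 0\<close> unfolding gradient_flow_def by blast
    have bal: "fst G ** transpose (fst (W t)) = transpose (snd (W t)) ** snd G"
      using gradient_balanced[OF factors grad] .
    then have bal': "fst (W t) ** transpose (fst G) = transpose (snd G) ** snd (W t)"
      by (metis matrix_transpose_mul transpose_transpose)
    show ?thesis
      using has_vector_derivative_imbalance[OF W']
      by (simp add: bal bal' transpose_uminus matrix_mult_minus_left matrix_mult_minus_right)
  qed
  then obtain c where "\<forall>s\<in>{0..}. imbalance (W s) = c"
    by (metis has_vector_derivative_zero_constant[of "{0..}"] convex_real_interval(1) atLeast_iff)
  then show ?thesis
    using \<open>t \<ge> 0\<close> by simp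
qed

lemma tendsto_imbalance [tendsto_intros]:
  "(W \<longlongrightarrow> X) F \<Longrightarrow> ((\<lambda>t. imbalance (W t)) \<longlongrightarrow> imbalance X) F"
  unfolding imbalance_def
  by (intro tendsto_diff bounded_bilinear.tendsto[OF bounded_bilinear_matrix_matrix_mult]
      bounded_linear.tendsto[OF bounded_linear_transpose] tendsto_fst tendsto_snd)

lemma gradient_flow_limit_balanced:
  fixes L :: "(real^'d^'m) \<times> (real^'m^'k) \<Rightarrow> real"
  assumes factors: "\<And>X Y. snd X ** fst X = snd Y ** fst Y \<Longrightarrow> L X = L Y"
    and flow: "gradient_flow L W" and balanced: "imbalance (W 0) = 0"
    and lim: "(W \<longlongrightarrow> W_lim) at_top"
  shows "imbalance W_lim = 0"
proof -
  have "eventually (\<lambda>t. imbalance (W t) = 0) at_top"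
    using gradient_flow_imbalance_const[OF factors flow] balanced
    by (auto intro: eventually_at_top_linorderI[of 0])
  then have "((\<lambda>t. imbalance (W t)) \<longlongrightarrow> 0) at_top"
    by (rule tendsto_eventually)
  then show ?thesis
    using tendsto_imbalance[OF lim] by (metis tendsto_unique trivial_limit_at_top_linorder)
qed

lemma balanced_norm_eq:
  fixes W1 :: "real^'d^'m" and W2 :: "real^'m^'k"
  assumes "W1 ** transpose W1 = transpose W2 ** W2"
  shows "norm (transpose W1 *v x) = norm (W2 *v x)"
proof -
  have "(transpose W1 *v x) \<bullet> (transpose W1 *v x) = x \<bullet> ((W1 ** transpose W1) *v x)"
    using dot_lmul_matrix[of x W1 "transpose W1 *v x", folded transpose_matrix_vector]
    unfolding matrix_vector_mul_assoc .
  also have "\<dots> = (W2 *v x) \<bullet> (W2 *v x)"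
    using dot_lmul_matrix[of x "transpose W2" "W2 *v x"]
    unfolding assms vector_transpose_matrix matrix_vector_mul_assoc by simp
  finally show ?thesis
    by (simp add: norm_eq_sqrt_inner)
qed

lemma balanced_column_eq_0:
  fixes W1 :: "real^'d^'m" and W2 :: "real^'m^'k"
  assumes "W1 ** transpose W1 = transpose W2 ** W2" and "W2 *v column j W1 = 0"
  shows "column j W1 = 0"
proof -
  have "transpose W1 *v column j W1 = 0"
    using balanced_norm_eq[OF assms(1)] assms(2) by (metis norm_eq_zero)
  moreover have "(transpose W1 *v column j W1) $ j = column j W1 \<bullet> column j W1"
    by (simp add: matrix_vector_mult_def transpose_def column_def inner_vec_def)
  ultimately show ?thesis
    by simp
qed

definition isotropic_moments :: "'a measure \<Rightarrow> ('j \<Rightarrow> 'a \<Rightarrow> real) \<Rightarrow> ('j \<Rightarrow> real) \<Rightarrow> real \<Rightarrow> bool"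
  where "isotropic_moments M X \<mu> s \<longleftrightarrow>
    (\<forall>j. integrable M (X j) \<and> (\<integral>z. X j z \<partial>M) = \<mu> j) \<and>
    (\<forall>j k. integrable M (\<lambda>z. (X j z - \<mu> j) * (X k z - \<mu> k)) \<and>
      (\<integral>z. (X j z - \<mu> j) * (X k z - \<mu> k) \<partial>M) = (if j = k then s else 0))"

lemma (in prob_space) isotropic_moments_centered:
  assumes "isotropic_moments M X \<mu> s"
  shows "integrable M (\<lambda>z. X j z - \<mu> j)" and "(\<integral>z. X j z - \<mu> j \<partial>M) = 0"
  using assms by (auto simp: isotropic_moments_def prob_space)

lemma (in prob_space) expectation_affine_square:
  fixes X :: "'j::finite \<Rightarrow> 'a \<Rightarrow> real"
  assumes "isotropic_moments M X \<mu> s"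
  shows "(\<integral>z. ((\<Sum>j\<in>UNIV. w j * X j z) - c)\<^sup>2 \<partial>M)
    = ((\<Sum>j\<in>UNIV. w j * \<mu> j) - c)\<^sup>2 + s * (\<Sum>j\<in>UNIV. (w j)\<^sup>2)"
proof -
  define a where "a = (\<Sum>j\<in>UNIV. w j * \<mu> j) - c"
  define Y where "Y z = (\<Sum>j\<in>UNIV. w j * (X j z - \<mu> j))" for z
  note centered = isotropic_moments_centered[OF assms]
  have intY: "integrable M Y" and EY: "integral\<^sup>L M Y = 0"
    using centered by (simp_all add: Y_def[abs_def])
  have Y2: "(Y z)\<^sup>2 = (\<Sum>j\<in>UNIV. \<Sum>k\<in>UNIV. (w j * w k) * ((X j z - \<mu> j) * (X k z - \<mu> k)))" for z
    by (simp add: Y_def power2_eq_square sum_product mult_ac)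
  have intY2: "integrable M (\<lambda>z. (Y z)\<^sup>2)"
    using assms unfolding Y2 isotropic_moments_def by simp
  have EY2: "(\<integral>z. (Y z)\<^sup>2 \<partial>M) = s * (\<Sum>j\<in>UNIV. (w j)\<^sup>2)"
    using assms unfolding Y2 isotropic_moments_def
    by (simp add: if_distrib[of "\<lambda>x. _ * x"] sum_distrib_left power2_eq_square mult_ac
        cong: if_cong)
  have "(\<Sum>j\<in>UNIV. w j * X j z) - c = Y z + a" for z
    by (simp add: Y_def a_def right_diff_distrib sum_subtractf)
  then have "(\<integral>z. ((\<Sum>j\<in>UNIV. w j * X j z) - c)\<^sup>2 \<partial>M)
      = (\<integral>z. (Y z)\<^sup>2 + 2 * a * Y z + a\<^sup>2 \<partial>M)"
    by (simp add: power2_sum algebra_simps)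
  also have "\<dots> = s * (\<Sum>j\<in>UNIV. (w j)\<^sup>2) + a\<^sup>2"
    using intY intY2 EY EY2 by (simp add: prob_space)
  finally show ?thesis
    by (simp add: a_def)
qed

lemma (in product_prob_space) integral_PiM_prod_subset:
  fixes f :: "'i \<Rightarrow> 'a \<Rightarrow> real"
  assumes "finite I" "J \<subseteq> I" "\<And>i. i \<in> J \<Longrightarrow> integrable (M i) (f i)"
  shows "integrable (PiM I M) (\<lambda>\<omega>. \<Prod>i\<in>J. f i (\<omega> i))"
    and "(\<integral>\<omega>. (\<Prod>i\<in>J. f i (\<omega> i)) \<partial>PiM I M) = (\<Prod>i\<in>J. integral\<^sup>L (M i) (f i))"
proof -
  define g where "g i = (if i \<in> J then f i else (\<lambda>_. 1))" for i
  have int_g: "integrable (M i) (g i)" for i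
    using assms(3) by (simp add: g_def)
  have prod_g: "(\<Prod>i\<in>I. g i (\<omega> i)) = (\<Prod>i\<in>J. f i (\<omega> i))" for \<omega>
    using assms(1,2) by (intro prod.mono_neutral_cong_right) (auto simp: g_def)
  have "(\<Prod>i\<in>I. integral\<^sup>L (M i) (g i)) = (\<Prod>i\<in>J. integral\<^sup>L (M i) (f i))"
    using assms(1,2) by (intro prod.mono_neutral_cong_right) (auto simp: g_def M.prob_space)
  then show "integrable (PiM I M) (\<lambda>\<omega>. \<Prod>i\<in>J. f i (\<omega> i))"
    and "(\<integral>\<omega>. (\<Prod>i\<in>J. f i (\<omega> i)) \<partial>PiM I M) = (\<Prod>i\<in>J. integral\<^sup>L (M i) (f i))"
    using product_integrable_prod[OF assms(1) int_g] product_integral_prod[OF assms(1) int_g]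
    unfolding prod_g by simp_all
qed

lemma isotropic_moments_PiM:
  fixes M :: "'i::finite \<Rightarrow> real measure"
  assumes prob: "\<And>i. prob_space (M i)"
    and mean: "\<And>i. integrable (M i) (\<lambda>x. x)" "\<And>i. (\<integral>x. x \<partial>M i) = \<mu> i"
    and var: "\<And>i. integrable (M i) (\<lambda>x. (x - \<mu> i)\<^sup>2)" "\<And>i. (\<integral>x. (x - \<mu> i)\<^sup>2 \<partial>M i) = s"
  shows "isotropic_moments (PiM UNIV M) (\<lambda>i \<omega>. \<omega> i) \<mu> s"
proof -
  interpret product_prob_space M "UNIV :: 'i set"
    using prob by (auto intro!: product_prob_space.intro product_sigma_finite.intro
        product_prob_space_axioms.intro prob_space_imp_sigma_finite)
  note prod_subset = integral_PiM_prod_subset[OF finite subset_UNIV]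
  have centered: "integrable (M i) (\<lambda>x. x - \<mu> i)" "(\<integral>x. x - \<mu> i \<partial>M i) = 0" for i
    using mean by (simp_all add: M.prob_space)
  have "integrable (PiM UNIV M) (\<lambda>\<omega>. \<omega> i) \<and> (\<integral>\<omega>. \<omega> i \<partial>PiM UNIV M) = \<mu> i" for i
    using prod_subset[of "{i}" "\<lambda>_ x. x"] mean by simp
  moreover have "integrable (PiM UNIV M) (\<lambda>\<omega>. (\<omega> j - \<mu> j) * (\<omega> k - \<mu> k)) \<and>
      (\<integral>\<omega>. (\<omega> j - \<mu> j) * (\<omega> k - \<mu> k) \<partial>PiM UNIV M) = (if j = k then s else 0)" for j k
  proof (cases "j = k")
    case True
    then show ?thesis
      using prod_subset[of "{j}" "\<lambda>i x. (x - \<mu> i)\<^sup>2"] var by (simp add: power2_eq_square)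
  next
    case False
    then show ?thesis
      using prod_subset[of "{j, k}" "\<lambda>i x. x - \<mu> i"] centered by simp
  qed
  ultimately show ?thesis
    unfolding isotropic_moments_def by blast
qed

lemma isotropic_moments_gauss_vec:
  assumes "\<sigma> > 0"
  shows "isotropic_moments (gauss_vec \<sigma> \<mu>) (\<lambda>i \<omega>. \<omega> i) (($) \<mu>) (\<sigma>\<^sup>2)"
  unfolding gauss_vec_def
proof (rule isotropic_moments_PiM)
  fix i
  show "prob_space (density lborel (normal_density (\<mu> $ i) \<sigma>))"
    using assms by (rule prob_space_normal_density)
  show "integrable (density lborel (normal_density (\<mu> $ i) \<sigma>)) (\<lambda>x. x)"
    and "(\<integral>x. x \<partial>density lborel (normal_density (\<mu> $ i) \<sigma>)) = \<mu> $ i"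
    using assms by (simp_all add: integrable_density integral_density
        integrable_normal_moment_nz_1 integral_normal_moment_nz_1)
  have "has_bochner_integral lborel (\<lambda>x. normal_density (\<mu> $ i) \<sigma> x * (x - \<mu> $ i)\<^sup>2) (\<sigma>\<^sup>2)"
    using normal_moment_even[OF assms, of "\<mu> $ i" 1] by simp
  then show "integrable (density lborel (normal_density (\<mu> $ i) \<sigma>)) (\<lambda>x. (x - \<mu> $ i)\<^sup>2)"
    and "(\<integral>x. (x - \<mu> $ i)\<^sup>2 \<partial>density lborel (normal_density (\<mu> $ i) \<sigma>)) = \<sigma>\<^sup>2"
    by (simp_all add: integrable_density integral_density has_bochner_integral_iff)
qed

lemma
  fixes g :: "'a \<Rightarrow> real" and h :: "'b \<Rightarrow> real"
  assumes "prob_space M1" "prob_space M2" "integrable M1 g" "integrable M2 h"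
  shows integrable_pair_measure_mult: "integrable (M1 \<Otimes>\<^sub>M M2) (\<lambda>z. g (fst z) * h (snd z))"
    and integral_pair_measure_mult:
      "(\<integral>z. g (fst z) * h (snd z) \<partial>(M1 \<Otimes>\<^sub>M M2)) = integral\<^sup>L M1 g * integral\<^sup>L M2 h"
proof -
  interpret M1: prob_space M1 by fact
  interpret M2: prob_space M2 by fact
  interpret pair_prob_space M1 M2 ..
  have [measurable]: "g \<in> borel_measurable M1" "h \<in> borel_measurable M2"
    using assms(3,4) by auto
  have "(\<integral>\<^sup>+ z. norm (g (fst z) * h (snd z)) \<partial>(M1 \<Otimes>\<^sub>M M2))
      = (\<integral>\<^sup>+ x. \<integral>\<^sup>+ y. ennreal (norm (g x)) * ennreal (norm (h y)) \<partial>M2 \<partial>M1)"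
    by (subst M2.nn_integral_fst[symmetric]) (auto simp: abs_mult ennreal_mult)
  also have "\<dots> = (\<integral>\<^sup>+ x. norm (g x) \<partial>M1) * (\<integral>\<^sup>+ y. norm (h y) \<partial>M2)"
    by (simp add: nn_integral_cmult nn_integral_multc)
  also have "\<dots> < \<infinity>"
    using assms(3,4) by (simp add: integrable_iff_bounded ennreal_mult_less_top)
  finally show int: "integrable (M1 \<Otimes>\<^sub>M M2) (\<lambda>z. g (fst z) * h (snd z))"
    by (simp add: integrable_iff_bounded)
  show "(\<integral>z. g (fst z) * h (snd z) \<partial>(M1 \<Otimes>\<^sub>M M2)) = integral\<^sup>L M1 g * integral\<^sup>L M2 h"
    using integral_fst'[OF int] by simp
qed

lemma isotropic_moments_pair_measure:
  assumes M1: "prob_space M1" "isotropic_moments M1 X \<mu> s"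
    and M2: "prob_space M2" "isotropic_moments M2 Y \<nu> s"
  shows "isotropic_moments (M1 \<Otimes>\<^sub>M M2)
    (\<lambda>j z. case j of Inl i \<Rightarrow> X i (fst z) | Inr i \<Rightarrow> Y i (snd z)) (case_sum \<mu> \<nu>) s"
proof -
  define Z where "Z = (\<lambda>j z. case j of Inl i \<Rightarrow> X i (fst z) | Inr i \<Rightarrow> Y i (snd z))"
  note mult = integrable_pair_measure_mult[OF M1(1) M2(1)] integral_pair_measure_mult[OF M1(1) M2(1)]
  have one: "integrable M1 (\<lambda>_. 1::real)" "(\<integral>_. 1 \<partial>M1) = (1::real)"
    "integrable M2 (\<lambda>_. 1::real)" "(\<integral>_. 1 \<partial>M2) = (1::real)"
    using M1(1) M2(1)
    by (simp_all add: prob_space.prob_space finite_measure.integrable_const prob_space.finite_measure)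
  note centered = prob_space.isotropic_moments_centered[OF M1] prob_space.isotropic_moments_centered[OF M2]
  note X = M1(2)[unfolded isotropic_moments_def] and Y = M2(2)[unfolded isotropic_moments_def]
  have "integrable (M1 \<Otimes>\<^sub>M M2) (Z j) \<and> (\<integral>z. Z j z \<partial>(M1 \<Otimes>\<^sub>M M2)) = case_sum \<mu> \<nu> j" for j
  proof (cases j)
    case (Inl i)
    then show ?thesis
      using mult[of "X i" "\<lambda>_. 1"] X one by (simp add: Z_def)
  next
    case (Inr i)
    then show ?thesis
      using mult[of "\<lambda>_. 1" "Y i"] Y one by (simp add: Z_def)
  qed
  moreover have "integrable (M1 \<Otimes>\<^sub>M M2) (\<lambda>z. (Z j z - case_sum \<mu> \<nu> j) * (Z k z - case_sum \<mu> \<nu> k)) \<and>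
      (\<integral>z. (Z j z - case_sum \<mu> \<nu> j) * (Z k z - case_sum \<mu> \<nu> k) \<partial>(M1 \<Otimes>\<^sub>M M2))
        = (if j = k then s else 0)" for j k
  proof (cases j; cases k)
    fix i i' assume "j = Inl i" "k = Inl i'"
    then show ?thesis
      using mult[of "\<lambda>x. (X i x - \<mu> i) * (X i' x - \<mu> i')" "\<lambda>_. 1"] X one by (simp add: Z_def)
  next
    fix i i' assume "j = Inl i" "k = Inr i'"
    then show ?thesis
      using mult[of "\<lambda>x. X i x - \<mu> i" "\<lambda>y. Y i' y - \<nu> i'"] centered by (simp add: Z_def)
  next
    fix i i' assume "j = Inr i" "k = Inl i'"
    then show ?thesis
      using mult[of "\<lambda>x. X i' x - \<mu> i'" "\<lambda>y. Y i y - \<nu> i"] centered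
      by (simp add: Z_def mult.commute)
  next
    fix i i' assume "j = Inr i" "k = Inr i'"
    then show ?thesis
      using mult[of "\<lambda>_. 1" "\<lambda>y. (Y i y - \<nu> i) * (Y i' y - \<nu> i')"] Y one by (simp add: Z_def)
  qed
  ultimately show ?thesis
    unfolding isotropic_moments_def Z_def by blast
qed

lemma sum_UNIV_Plus:
  fixes f :: "'a::finite + 'b::finite \<Rightarrow> 'c::comm_monoid_add"
  shows "(\<Sum>j\<in>UNIV. f j) = (\<Sum>i\<in>UNIV. f (Inl i)) + (\<Sum>i\<in>UNIV. f (Inr i))"
  using sum.Plus[of "UNIV :: 'a set" "UNIV :: 'b set" f] by (simp add: comp_def)

lemma prob_space_gauss_vec: "\<sigma> > 0 \<Longrightarrow> prob_space (gauss_vec \<sigma> \<mu>)"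
  unfolding gauss_vec_def by (intro prob_space_PiM prob_space_normal_density)

lemma isotropic_moments_cond_dist:
  fixes v :: "real^'s::finite"
  assumes "\<sigma> > 0"
  shows "isotropic_moments (cond_dist \<sigma> v y :: (('s \<Rightarrow> real) \<times> ('n::finite \<Rightarrow> real)) measure)
    (\<lambda>j z. concat_vec (fst z) (snd z) $ j) (case_sum (\<lambda>i. y * v $ i) (\<lambda>_. 0)) (\<sigma>\<^sup>2)"
proof -
  have coordinates: "(\<lambda>j z. concat_vec (fst z) (snd z) $ j)
      = (\<lambda>j z. case j of Inl i \<Rightarrow> fst z i | Inr i \<Rightarrow> snd z i)"
    by (simp add: concat_vec_def)
  have mean: "case_sum (\<lambda>i. y * v $ i) (\<lambda>_. 0) = case_sum (($) (y *\<^sub>R v)) (($) (0 :: real^'n))"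
    by (intro ext) (simp split: sum.split)
  show ?thesis
    unfolding cond_dist_def coordinates mean
    by (intro isotropic_moments_pair_measure prob_space_gauss_vec isotropic_moments_gauss_vec assms)
qed

lemma cond_dist_expected_loss:
  fixes v :: "real^'s::finite" and W :: "(real^('s + 'n::finite)^('m::finite)) \<times> (real^'m^1)"
  assumes "\<sigma> > 0"
  shows "(\<integral>z. 1/2 * (norm (model W (concat_vec (fst z) (snd z)) - vec y))\<^sup>2
      \<partial>(cond_dist \<sigma> v y :: (('s \<Rightarrow> real) \<times> ('n \<Rightarrow> real)) measure))
    = 1/2 * ((y * (\<Sum>i\<in>UNIV. (snd W ** fst W) $ 1 $ Inl i * v $ i) - y)\<^sup>2
        + \<sigma>\<^sup>2 * (\<Sum>j\<in>UNIV. ((snd W ** fst W) $ 1 $ j)\<^sup>2))"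
proof -
  interpret prob_space "cond_dist \<sigma> v y :: (('s \<Rightarrow> real) \<times> ('n \<Rightarrow> real)) measure"
    unfolding cond_dist_def using assms by (intro prob_space_pair prob_space_gauss_vec)
  have "(norm (model W x - vec y))\<^sup>2 = ((\<Sum>j\<in>UNIV. (snd W ** fst W) $ 1 $ j * x $ j) - y)\<^sup>2" for x
    by (simp add: norm_vector_1 model_def matrix_vector_mult_def)
  moreover have "(\<Sum>j\<in>UNIV. (snd W ** fst W) $ 1 $ j * case_sum (\<lambda>i. y * v $ i) (\<lambda>_. 0) j)
      = y * (\<Sum>i\<in>UNIV. (snd W ** fst W) $ 1 $ Inl i * v $ i)"
    by (simp add: sum_UNIV_Plus sum_distrib_left mult_ac)
  ultimately show ?thesis
    using expectation_affine_square[OF isotropic_moments_cond_dist[OF assms]] by simp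
qed

lemma pop_loss_eq:
  fixes v :: "real^'s::finite" and W :: "(real^('s + 'n::finite)^('m::finite)) \<times> (real^'m^1)"
  assumes "\<sigma> > 0"
  shows "pop_loss p \<sigma> v W = 1/2 * (((\<Sum>i\<in>UNIV. (snd W ** fst W) $ 1 $ Inl i * v $ i) - 1)\<^sup>2
      + \<sigma>\<^sup>2 * (\<Sum>i\<in>UNIV. ((snd W ** fst W) $ 1 $ Inl i)\<^sup>2))
      + \<sigma>\<^sup>2 / 2 * (\<Sum>i\<in>UNIV. ((snd W ** fst W) $ 1 $ Inr i)\<^sup>2)"
proof -
  have label_symmetry: "((-1) * S - (-1))\<^sup>2 = (1 * S - 1)\<^sup>2" for S :: real
    by (simp add: power2_eq_square algebra_simps)
  have average: "p * E + (1 - p) * E = E" for E :: real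
    by (simp add: algebra_simps)
  show ?thesis
    unfolding pop_loss_def cond_dist_expected_loss[OF assms] label_symmetry average
    by (simp add: sum_UNIV_Plus distrib_left)
qed

lemma pop_loss_factors:
  "snd X ** fst X = snd Y ** fst Y \<Longrightarrow> pop_loss p \<sigma> v X = pop_loss p \<sigma> v Y"
  unfolding pop_loss_def model_def by simp

lemma pop_loss_minimizer_noise_weights:
  fixes v :: "real^'s::finite" and W :: "(real^('s + 'n::finite)^('m::finite)) \<times> (real^'m^1)"
  assumes "\<sigma> > 0"
    and min: "\<forall>W' :: (real^('s + 'n)^'m) \<times> (real^'m^1). pop_loss p \<sigma> v W \<le> pop_loss p \<sigma> v W'"
  shows "(snd W ** fst W) $ 1 $ Inr j = 0"
proof -
  define W' where "W' = ((\<chi> k l. case l of Inl _ \<Rightarrow> fst W $ k $ l | Inr _ \<Rightarrow> 0), snd W)"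
  have "(snd W' ** fst W') $ 1 $ Inl i = (snd W ** fst W) $ 1 $ Inl i"
    and "(snd W' ** fst W') $ 1 $ Inr i' = 0" for i i'
    by (simp_all add: W'_def matrix_matrix_mult_def)
  then have "pop_loss p \<sigma> v W = pop_loss p \<sigma> v W' + \<sigma>\<^sup>2 / 2 * (\<Sum>i\<in>UNIV. ((snd W ** fst W) $ 1 $ Inr i)\<^sup>2)"
    unfolding pop_loss_eq[OF assms(1)] by simp
  then have "\<sigma>\<^sup>2 / 2 * (\<Sum>i\<in>UNIV. ((snd W ** fst W) $ 1 $ Inr i)\<^sup>2) \<le> 0"
    using min[rule_format, of W'] by linarith
  then have "(\<Sum>i\<in>UNIV. ((snd W ** fst W) $ 1 $ Inr i)\<^sup>2) = 0"
    using \<open>\<sigma> > 0\<close> by (simp add: mult_le_0_iff antisym sum_nonneg)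
  then show ?thesis
    by (simp add: sum_nonneg_eq_0_iff)
qed

theorem theorem2:
  fixes v :: "real^'s::finite" and \<sigma> p :: real
    and W :: "real \<Rightarrow> (real^('s + 'n::finite)^('m::finite)) \<times> (real^'m^1)"
    and Winf :: "(real^('s + 'n)^'m) \<times> (real^'m^1)"
  assumes "\<sigma> > 0" and "0 \<le> p" and "p \<le> 1"
    and "gradient_flow (pop_loss p \<sigma> v) W"
    and "transpose (snd (W 0)) ** snd (W 0) = fst (W 0) ** transpose (fst (W 0))"
    and "(W \<longlongrightarrow> Winf) at_top"
    and "\<forall>W' :: (real^('s + 'n)^'m) \<times> (real^'m^1). pop_loss p \<sigma> v Winf \<le> pop_loss p \<sigma> v W'"
  shows "\<forall>i j. fst Winf $ i $ Inr j = 0"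
proof (intro allI)
  fix i j
  have "imbalance Winf = 0"
    using gradient_flow_limit_balanced[OF pop_loss_factors assms(4) _ assms(6)] assms(5)
    by (simp add: imbalance_def)
  then have balanced: "fst Winf ** transpose (fst Winf) = transpose (snd Winf) ** snd Winf"
    by (simp add: imbalance_def)
  have "(snd Winf ** fst Winf) $ 1 $ Inr j = 0"
    using pop_loss_minimizer_noise_weights[OF assms(1) assms(7)] .
  then have "snd Winf *v column (Inr j) (fst Winf) = 0"
    by (simp add: vec_eq_iff forall_1 matrix_matrix_mult_def matrix_vector_mult_def column_def)
  then have "column (Inr j) (fst Winf) = 0"
    using balanced_column_eq_0[OF balanced] by blast
  then show "fst Winf $ i $ Inr j = 0"
    by (simp add: column_def vec_eq_iff)
qed

end
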